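(* Let $n$ be an even positive integer and $m$ a positive divisor of $n$. Let $G:\mathbb{F}_{2^n}\to\mathbb{F}_{2^m}$ be a vectorial bent function and $g:\mathbb{F}_{2^n}\to\mathbb{F}_2\subseteq\mathbb{F}_{2^m}$ a Boolean function. Then $H(x)=G(x)+g(x)$ is a vectorial bent (respectively, vectorial plateaued) $(n,m)$-function if and only if for every $\lambda\in\mathbb{F}_{2^m}^*$ with $\mathrm{Tr}^m_1(\lambda)=1$, the Boolean function $G_\lambda(x)+g(x)$ is bent (respectively, plateaued).
   Context: $\mathrm{Tr}^m_1(x)=\sum_{i=0}^{m-1}x^{2^i}$. For an $(n,m)$-function $F:\mathbb{F}_{2^n}\to\mathbb{F}_{2^m}$ and $\lambda\in\mathbb{F}_{2^m}^*$, the component $F_\lambda(x)=\mathrm{Tr}^m_1(\lambda F(x))$. For a Boolean function $f$ on $\mathbb{F}_{2^n}$, $W_f(a)=\sum_x(-1)^{f(x)+\mathrm{Tr}^n_1(ax)}$; $f$ is bent if $|W_f(a)|=2^{n/2}$ for all $a$, and plateaued if $W_f$ takes values in $\{0,\pm2^s\}$ for some integer $n/2\le s\le n$. $F$ is vectorial bent (resp. vectorial plateaued) if all its components $F_\lambda$, $\lambda\neq0$, are bent (resp. plateaued). *)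

theory Defs
  imports Main
begin

text \<open>Finite fields F_{2^k} are modelled by finite field types with 2^k elements.
  Elements of the prime field F_2 are 0 and 1 of the respective field.\<close>

definition tr :: "nat \<Rightarrow> 'a::comm_ring_1 \<Rightarrow> 'a" where
  "tr k y = (\<Sum>i<k. y ^ (2 ^ i))"

definition sgn2 :: "'c::zero \<Rightarrow> int" where
  "sgn2 b = (if b = 0 then 1 else -1)"

text \<open>Walsh transform of a Boolean function f on F_{2^n}; f takes values in
  {0,1} of some field 'b (F_2 as a subfield of 'b).
  W_f(a) = sum_x (-1)^(f x + Tr^n_1(a x)).\<close>
definition walsh :: "nat \<Rightarrow> ('a::{comm_ring_1,finite} \<Rightarrow> 'b::zero) \<Rightarrow> 'a \<Rightarrow> int" where
  "walsh n f a = (\<Sum>x\<in>UNIV. sgn2 (f x) * sgn2 (tr n (a * x)))"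

definition bent :: "nat \<Rightarrow> ('a::{comm_ring_1,finite} \<Rightarrow> 'b::zero) \<Rightarrow> bool" where
  "bent n f \<longleftrightarrow> (\<forall>a. \<bar>walsh n f a\<bar> = 2 ^ (n div 2))"

definition plateaued :: "nat \<Rightarrow> ('a::{comm_ring_1,finite} \<Rightarrow> 'b::zero) \<Rightarrow> bool" where
  "plateaued n f \<longleftrightarrow> (\<exists>s::nat. n \<le> 2 * s \<and> s \<le> n \<and>
      (\<forall>a. walsh n f a \<in> {0, 2 ^ s, - (2 ^ s)}))"

definition component :: "nat \<Rightarrow> 'b::comm_ring_1 \<Rightarrow> ('a \<Rightarrow> 'b) \<Rightarrow> 'a \<Rightarrow> 'b" where
  "component m lam F = (\<lambda>x. tr m (lam * F x))"

definition vectorial_bent :: "nat \<Rightarrow> nat \<Rightarrow> ('a::{comm_ring_1,finite} \<Rightarrow> 'b::comm_ring_1) \<Rightarrow> bool" where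
  "vectorial_bent n m F \<longleftrightarrow> (\<forall>lam. lam \<noteq> 0 \<longrightarrow> bent n (component m lam F))"

definition vectorial_plateaued :: "nat \<Rightarrow> nat \<Rightarrow> ('a::{comm_ring_1,finite} \<Rightarrow> 'b::comm_ring_1) \<Rightarrow> bool" where
  "vectorial_plateaued n m F \<longleftrightarrow> (\<forall>lam. lam \<noteq> 0 \<longrightarrow> plateaued n (component m lam F))"

end

theory Submission
  imports Defs
begin

text \<open>In characteristic 2 the trace is additive and takes only the values 0 and 1. Since
  \<open>g\<close> is Boolean, the component of \<open>G + g\<close> at \<open>\<lambda>\<close> is \<open>G\<^sub>\<lambda> + Tr(\<lambda>) g\<close>: it is the
  bent function \<open>G\<^sub>\<lambda>\<close> when \<open>Tr(\<lambda>) = 0\<close> and \<open>G\<^sub>\<lambda> + g\<close> when \<open>Tr(\<lambda>) = 1\<close>. As bent functions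
  are plateaued, only the components with \<open>Tr(\<lambda>) = 1\<close> matter for either property.\<close>

lemma two_eq_zero_if_card_UNIV_power_two:
  assumes "card (UNIV :: 'b::{field,finite} set) = 2 ^ m" and "0 < m"
  shows "(2::'b) = 0"
proof -
  have "(\<Sum>y\<in>UNIV. (1::'b) + y) = (\<Sum>y\<in>UNIV. y)"
    by (rule sum.reindex_bij_witness[of _ "\<lambda>y. y - 1" "\<lambda>y. y + 1"]) auto
  hence "of_nat (card (UNIV :: 'b set)) = (0::'b)"
    by (simp add: sum.distrib)
  hence "(2::'b) ^ m = 0" using assms(1) by simp
  thus ?thesis by simp
qed

lemma power_two_power_add:
  assumes "(2::'b::field) = 0"
  shows "((a::'b) + b) ^ (2 ^ i) = a ^ (2 ^ i) + b ^ (2 ^ i)"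
proof (induction i)
  case 0 then show ?case by simp
next
  case (Suc i)
  have "(a + b) ^ (2 ^ Suc i) = ((a + b) ^ (2 ^ i))\<^sup>2"
    by (simp add: power_mult[symmetric] mult.commute)
  also have "\<dots> = (a ^ (2 ^ i))\<^sup>2 + (b ^ (2 ^ i))\<^sup>2"
    using assms by (simp add: Suc power2_sum)
  also have "\<dots> = a ^ (2 ^ Suc i) + b ^ (2 ^ Suc i)"
    by (simp add: power_mult[symmetric] mult.commute)
  finally show ?case .
qed

lemma power_card_UNIV:
  fixes x :: "'b::{field,finite}"
  shows "x ^ card (UNIV :: 'b set) = x"
proof (cases "x = 0")
  case True
  then show ?thesis by (simp add: finite_UNIV_card_ge_0)
next
  case False
  let ?S = "UNIV - {0::'b}"
  have "(\<Prod>y\<in>?S. x * y) = (\<Prod>y\<in>?S. y)"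
    by (rule prod.reindex_bij_witness[of _ "\<lambda>y. y / x" "\<lambda>y. x * y"]) (use False in auto)
  hence "x ^ card ?S * (\<Prod>y\<in>?S. y) = (\<Prod>y\<in>?S. y)"
    by (simp add: prod.distrib)
  hence "x ^ card ?S = 1" by simp
  moreover have "card ?S = card (UNIV :: 'b set) - 1" by (simp add: card_Diff_singleton)
  moreover have "card (UNIV :: 'b set) > 0" by (simp add: finite_UNIV_card_ge_0)
  ultimately show ?thesis
    by (metis Suc_diff_1 mult.right_neutral power_Suc)
qed

lemma tr_zero [simp]: "tr k (0::'b::comm_ring_1) = 0"
  by (simp add: tr_def power_0_left)

lemma tr_add:
  assumes "(2::'b::field) = 0"
  shows "tr k ((a::'b) + b) = tr k a + tr k b"
  unfolding tr_def using power_two_power_add[OF assms] by (simp add: sum.distrib)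

lemma tr_square:
  assumes "(2::'b::field) = 0"
  shows "(tr k (a::'b))\<^sup>2 = tr k (a\<^sup>2)"
proof (induction k)
  case 0 then show ?case by (simp add: tr_def)
next
  case (Suc k)
  have "(tr (Suc k) a)\<^sup>2 = (tr k a + a ^ 2 ^ k)\<^sup>2" by (simp add: tr_def)
  also have "\<dots> = (tr k a)\<^sup>2 + (a ^ 2 ^ k)\<^sup>2"
    using power_two_power_add[OF assms, of "tr k a" "a ^ 2 ^ k" 1] by simp
  also have "\<dots> = tr (Suc k) (a\<^sup>2)"
    using Suc by (simp add: tr_def power_mult[symmetric] mult.commute)
  finally show ?case .
qed

lemma tr_zero_or_one:
  assumes "card (UNIV :: 'b::{field,finite} set) = 2 ^ m" and "0 < m"
  shows "tr m (lam::'b) = 0 \<or> tr m lam = 1"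
proof -
  have char2: "(2::'b) = 0" by (rule two_eq_zero_if_card_UNIV_power_two[OF assms])
  have "tr (Suc m) lam = lam + tr m (lam\<^sup>2)"
    unfolding tr_def by (subst sum.lessThan_Suc_shift) (simp add: power_mult[symmetric] mult.commute)
  moreover have "tr (Suc m) lam = tr m lam + lam ^ 2 ^ m" by (simp add: tr_def)
  moreover have "lam ^ 2 ^ m = lam" using power_card_UNIV[of lam] assms(1) by simp
  ultimately have "tr m (lam\<^sup>2) = tr m lam" by simp
  hence "(tr m lam)\<^sup>2 = tr m lam" using tr_square[OF char2] by simp
  hence "tr m lam * (tr m lam - 1) = 0" by (simp add: algebra_simps power2_eq_square)
  thus ?thesis by simp
qed

lemma component_add_boolean:
  assumes "(2::'b::field) = 0" and "\<forall>x. g x \<in> {0, 1::'b}"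
  shows "component m lam (\<lambda>x. G x + g x) = (\<lambda>x. component m lam G x + g x * tr m lam)"
proof
  fix x
  have "tr m (lam * g x) = g x * tr m lam"
    using assms(2) by (cases "g x = 0") auto
  then show "component m lam (\<lambda>x. G x + g x) x = component m lam G x + g x * tr m lam"
    by (simp add: component_def distrib_left tr_add[OF assms(1)])
qed

lemma bent_imp_plateaued:
  assumes "even n" and "bent n f"
  shows "plateaued n f"
  unfolding plateaued_def
proof (intro exI[of _ "n div 2"] conjI allI)
  fix a
  have "\<bar>walsh n f a\<bar> = 2 ^ (n div 2)" using assms(2) by (simp add: bent_def)
  thus "walsh n f a \<in> {0, 2 ^ (n div 2), - (2 ^ (n div 2))}" by (auto simp: abs_if split: if_splits)
qed (use assms(1) in auto)

lemma components_add_boolean_iff: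
  fixes G g :: "'a \<Rightarrow> 'b::{field,finite}"
  assumes "card (UNIV :: 'b set) = 2 ^ m" and "0 < m"
    and "\<forall>x. g x \<in> {0, 1}"
    and "\<And>lam. lam \<noteq> 0 \<Longrightarrow> P (component m lam G)"
  shows "(\<forall>lam. lam \<noteq> 0 \<longrightarrow> P (component m lam (\<lambda>x. G x + g x))) \<longleftrightarrow>
         (\<forall>lam. lam \<noteq> 0 \<and> tr m lam = 1 \<longrightarrow> P (\<lambda>x. component m lam G x + g x))"
proof -
  have "component m lam (\<lambda>x. G x + g x) =
        (if tr m lam = 1 then (\<lambda>x. component m lam G x + g x) else component m lam G)" for lam
    using component_add_boolean[OF two_eq_zero_if_card_UNIV_power_two[OF assms(1,2)] assms(3)]
      tr_zero_or_one[OF assms(1,2), of lam]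
    by auto
  then show ?thesis using assms(4) by auto
qed

theorem theorem3:
  fixes G g :: "'a::{field,finite} \<Rightarrow> 'b::{field,finite}"
    and n m :: nat
  assumes "card (UNIV :: 'a set) = 2 ^ n" and "card (UNIV :: 'b set) = 2 ^ m"
    and "0 < n" and "even n" and "0 < m" and "m dvd n"
    and "vectorial_bent n m G"
    and "\<forall>x. g x \<in> {0, 1}"
  shows "(vectorial_bent n m (\<lambda>x. G x + g x) \<longleftrightarrow>
            (\<forall>lam. lam \<noteq> 0 \<and> tr m lam = 1 \<longrightarrow> bent n (\<lambda>x. component m lam G x + g x)))
       \<and> (vectorial_plateaued n m (\<lambda>x. G x + g x) \<longleftrightarrow>
            (\<forall>lam. lam \<noteq> 0 \<and> tr m lam = 1 \<longrightarrow> plateaued n (\<lambda>x. component m lam G x + g x)))"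
proof
  have bent_G: "lam \<noteq> 0 \<Longrightarrow> bent n (component m lam G)" for lam
    using assms(7) by (simp add: vectorial_bent_def)
  show "vectorial_bent n m (\<lambda>x. G x + g x) \<longleftrightarrow>
          (\<forall>lam. lam \<noteq> 0 \<and> tr m lam = 1 \<longrightarrow> bent n (\<lambda>x. component m lam G x + g x))"
    unfolding vectorial_bent_def
    by (rule components_add_boolean_iff[where P = "bent n", OF assms(2,5,8) bent_G])
  show "vectorial_plateaued n m (\<lambda>x. G x + g x) \<longleftrightarrow>
          (\<forall>lam. lam \<noteq> 0 \<and> tr m lam = 1 \<longrightarrow> plateaued n (\<lambda>x. component m lam G x + g x))"
    unfolding vectorial_plateaued_def
    by (rule components_add_boolean_iff[where P = "plateaued n", OF assms(2,5,8) bent_imp_plateaued[OF assms(4) bent_G]])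
qed

end
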